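(* Let $\mu,\nu\in\mathbb{H}$ be pure unit quaternions, let $N\ge 1$, and let $\alpha_1,\ldots,\alpha_N,\beta_1,\ldots,\beta_N$ be real angles. Let $q$ be a quaternion-valued Gaussian random variable such that, for every $i\in\{1,\ldots,N\}$, $q\stackrel{d}{=} e^{\mu\alpha_i}\,q\,e^{\nu\beta_i}$. Then $q\stackrel{d}{=} e^{\mu\zeta}\,q\,e^{\nu\chi}$, where $\zeta=\sum_{i=1}^N\alpha_i$ and $\chi=\sum_{i=1}^N\beta_i$.
   Context: $\mathbb{H}$ denotes Hamilton's quaternions with basis $1,\mathbf{i},\mathbf{j},\mathbf{k}$, $\mathbf{i}^2=\mathbf{j}^2=\mathbf{k}^2=\mathbf{i}\mathbf{j}\mathbf{k}=-1$. A quaternion is pure if its real (scalar) part is zero; for a pure unit quaternion $\mu$ (so $\mu^2=-1$) and real $\theta$, $e^{\mu\theta}=\cos\theta+\mu\sin\theta$. A quaternion Gaussian random variable is a random quaternion $q=a+b\mathbf{i}+c\mathbf{j}+d\mathbf{k}$ whose real vector $(a,b,c,d)$ is Gaussian. The notation $X\stackrel{d}{=}Y$ means equality in distribution. In the paper's terminology, $q\stackrel{d}{=}e^{\mu\alpha}qe^{\nu\beta}$ is called ${}^{\alpha}(\mu,\nu)^{\beta}$-properness. *)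

theory Defs
  imports "HOL-Probability.Probability"
begin

text \<open>Quaternions a + b i + c j + d k represented as real 4-tuples (a,b,c,d);
  the product topology / Borel sets / Euclidean norm on the tuple type are the
  standard ones on R^4.\<close>

type_synonym quat = "real \<times> real \<times> real \<times> real"

definition qmult :: "quat \<Rightarrow> quat \<Rightarrow> quat" (infixl "\<otimes>\<^sub>q" 70) where
  "qmult p q = (case p of (a1,b1,c1,d1) \<Rightarrow> case q of (a2,b2,c2,d2) \<Rightarrow>
     (a1*a2 - b1*b2 - c1*c2 - d1*d2,
      a1*b2 + b1*a2 + c1*d2 - d1*c2,
      a1*c2 - b1*d2 + c1*a2 + d1*b2,
      a1*d2 + b1*c2 - c1*b2 + d1*a2))"

definition pure_quat :: "quat \<Rightarrow> bool" where
  "pure_quat q \<longleftrightarrow> fst q = 0"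

definition pure_unit_quat :: "quat \<Rightarrow> bool" where
  "pure_unit_quat q \<longleftrightarrow> pure_quat q \<and> norm q = 1"

definition qexp :: "quat \<Rightarrow> real \<Rightarrow> quat" where
  "qexp \<mu> \<theta> = (cos \<theta>, 0, 0, 0) + sin \<theta> *\<^sub>R \<mu>"

text \<open>A random quaternion is Gaussian iff its real 4-vector is (jointly) Gaussian,
  i.e. every real linear functional of it is normally distributed (possibly degenerate).\<close>
definition quat_gaussian :: "'s measure \<Rightarrow> ('s \<Rightarrow> quat) \<Rightarrow> bool" where
  "quat_gaussian M X \<longleftrightarrow> X \<in> borel_measurable M \<and>
     (\<forall>v::quat. \<exists>m \<sigma>::real.
        (\<sigma> = 0 \<and> distr M borel (\<lambda>\<omega>. v \<bullet> X \<omega>) = return borel m) \<or>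
        (\<sigma> > 0 \<and> distributed M lborel (\<lambda>\<omega>. v \<bullet> X \<omega>) (normal_density m \<sigma>)))"

definition eq_distr :: "'s measure \<Rightarrow> ('s \<Rightarrow> quat) \<Rightarrow> ('s \<Rightarrow> quat) \<Rightarrow> bool" where
  "eq_distr M X Y \<longleftrightarrow> distr M borel X = distr M borel Y"

end

theory Submission
  imports Defs
begin

text \<open>For a pure unit quaternion \<open>\<mu>\<close> the map \<open>\<theta> \<mapsto> e\<^sup>\<mu>\<^sup>\<theta>\<close> is a homomorphism
  from \<open>(\<real>, +)\<close> into the unit quaternions, because \<open>\<mu>\<^sup>2 = -1\<close>. Hence the two-sided
  rotations \<open>x \<mapsto> e\<^sup>\<mu>\<^sup>\<alpha> x e\<^sup>\<nu>\<^sup>\<beta>\<close> compose by adding angles, and a distribution invariant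
  under finitely many of them is invariant under their composite.\<close>

lemma qmult_assoc: "(a \<otimes>\<^sub>q b) \<otimes>\<^sub>q c = a \<otimes>\<^sub>q (b \<otimes>\<^sub>q c)"
proof -
  obtain a1 a2 a3 a4 where a: "a = (a1,a2,a3,a4)" by (cases a) auto
  obtain b1 b2 b3 b4 where b: "b = (b1,b2,b3,b4)" by (cases b) auto
  obtain c1 c2 c3 c4 where c: "c = (c1,c2,c3,c4)" by (cases c) auto
  show ?thesis unfolding a b c by (simp only: qmult_def prod.case prod.inject; algebra)
qed

lemma qmult_one_left: "(1,0,0,0) \<otimes>\<^sub>q x = x"
  by (cases x) (simp add: qmult_def)

lemma qmult_one_right: "x \<otimes>\<^sub>q (1,0,0,0) = x"
  by (cases x) (simp add: qmult_def)

lemma continuous_on_qmult [continuous_intros]: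
  assumes "continuous_on S f" "continuous_on S g"
  shows "continuous_on S (\<lambda>x. f x \<otimes>\<^sub>q g x)"
  unfolding qmult_def split_beta using assms by (intro continuous_intros)

lemma pure_unit_quat_iff:
  "pure_unit_quat (a,b,c,d) \<longleftrightarrow> a = 0 \<and> b\<^sup>2 + c\<^sup>2 + d\<^sup>2 = 1"
  by (auto simp: pure_unit_quat_def pure_quat_def norm_Pair add.assoc)

lemma qexp_zero: "qexp \<mu> 0 = (1,0,0,0)"
  by (simp add: qexp_def zero_prod_def)

lemma qexp_add:
  assumes "pure_unit_quat \<mu>"
  shows "qexp \<mu> a \<otimes>\<^sub>q qexp \<mu> b = qexp \<mu> (a + b)"
proof -
  obtain x y z where \<mu>: "\<mu> = (0,x,y,z)" and unit: "x\<^sup>2 + y\<^sup>2 + z\<^sup>2 = 1"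
    using assms by (cases \<mu>) (auto simp: pure_unit_quat_iff)
  have "cos (a + b) = cos a * cos b - sin a * sin b * (x\<^sup>2 + y\<^sup>2 + z\<^sup>2)"
    using unit by (simp add: cos_add)
  moreover have "sin (a + b) = cos a * sin b + sin a * cos b"
    by (simp add: sin_add algebra_simps)
  ultimately show ?thesis
    unfolding qexp_def \<mu> by (simp add: qmult_def algebra_simps power2_eq_square)
qed

definition qrot :: "quat \<Rightarrow> quat \<Rightarrow> real \<Rightarrow> real \<Rightarrow> quat \<Rightarrow> quat" where
  "qrot \<mu> \<nu> \<alpha> \<beta> x = qexp \<mu> \<alpha> \<otimes>\<^sub>q x \<otimes>\<^sub>q qexp \<nu> \<beta>"

lemma qrot_zero: "qrot \<mu> \<nu> 0 0 x = x"
  by (simp add: qrot_def qexp_zero qmult_one_left qmult_one_right)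

lemma qrot_qrot:
  assumes "pure_unit_quat \<mu>" "pure_unit_quat \<nu>"
  shows "qrot \<mu> \<nu> \<alpha> \<beta> (qrot \<mu> \<nu> \<alpha>' \<beta>' x) = qrot \<mu> \<nu> (\<alpha> + \<alpha>') (\<beta>' + \<beta>) x"
  unfolding qrot_def by (simp add: qmult_assoc qexp_add[OF assms(2)] qexp_add[OF assms(1), symmetric])

lemma qrot_measurable [measurable]: "qrot \<mu> \<nu> \<alpha> \<beta> \<in> borel_measurable borel"
proof (rule borel_measurable_continuous_onI)
  show "continuous_on UNIV (qrot \<mu> \<nu> \<alpha> \<beta>)"
    unfolding qrot_def by (intro continuous_intros)
qed

lemma distr_comp_invariant:
  assumes X: "X \<in> measurable M N" and f: "f \<in> measurable N N" and g: "g \<in> measurable N N"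
    and inv_f: "distr M N (f \<circ> X) = distr M N X" and inv_g: "distr M N (g \<circ> X) = distr M N X"
  shows "distr M N (f \<circ> g \<circ> X) = distr M N X"
proof -
  have "distr M N (f \<circ> (g \<circ> X)) = distr (distr M N (g \<circ> X)) N f"
    using distr_distr[OF f measurable_comp[OF X g]] by simp
  also have "\<dots> = distr M N (f \<circ> X)"
    using distr_distr[OF f X] inv_g by simp
  finally show ?thesis using inv_f by (simp add: comp_assoc)
qed

lemma distr_qrot_sum_invariant:
  fixes n :: nat
  assumes "pure_unit_quat \<mu>" "pure_unit_quat \<nu>" and X: "X \<in> borel_measurable M"
    and inv: "\<And>i. i \<in> {1..n} \<Longrightarrow> distr M borel (qrot \<mu> \<nu> (\<alpha> i) (\<beta> i) \<circ> X) = distr M borel X"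
  shows "distr M borel (qrot \<mu> \<nu> (\<Sum>i=1..n. \<alpha> i) (\<Sum>i=1..n. \<beta> i) \<circ> X) = distr M borel X"
  using inv
proof (induction n)
  case 0
  then show ?case by (simp add: qrot_zero comp_def)
next
  case (Suc n)
  have IH: "distr M borel (qrot \<mu> \<nu> (\<Sum>i=1..n. \<alpha> i) (\<Sum>i=1..n. \<beta> i) \<circ> X) = distr M borel X"
    by (rule Suc.IH, rule Suc.prems) simp
  have step: "distr M borel (qrot \<mu> \<nu> (\<alpha> (Suc n)) (\<beta> (Suc n)) \<circ> X) = distr M borel X"
    by (rule Suc.prems) simp
  have split: "qrot \<mu> \<nu> (\<Sum>i=1..Suc n. \<alpha> i) (\<Sum>i=1..Suc n. \<beta> i)
      = qrot \<mu> \<nu> (\<Sum>i=1..n. \<alpha> i) (\<Sum>i=1..n. \<beta> i) \<circ> qrot \<mu> \<nu> (\<alpha> (Suc n)) (\<beta> (Suc n))"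
    by (simp add: fun_eq_iff qrot_qrot[OF assms(1,2)] add.commute)
  show ?case
    unfolding split by (rule distr_comp_invariant[OF X _ _ IH step]) simp_all
qed

theorem mainTheorem1:
  fixes M :: "'s measure" and q :: "'s \<Rightarrow> quat" and \<mu> \<nu> :: quat
    and N :: nat and \<alpha> \<beta> :: "nat \<Rightarrow> real"
  assumes "prob_space M"
    and "pure_unit_quat \<mu>" and "pure_unit_quat \<nu>"
    and "N \<ge> 1"
    and "quat_gaussian M q"
    and "\<forall>i\<in>{1..N}. eq_distr M q (\<lambda>\<omega>. qexp \<mu> (\<alpha> i) \<otimes>\<^sub>q q \<omega> \<otimes>\<^sub>q qexp \<nu> (\<beta> i))"
  shows "eq_distr M q (\<lambda>\<omega>. qexp \<mu> (\<Sum>i=1..N. \<alpha> i) \<otimes>\<^sub>q q \<omega> \<otimes>\<^sub>q qexp \<nu> (\<Sum>i=1..N. \<beta> i))"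
proof -
  have "q \<in> borel_measurable M"
    using assms(5) by (simp add: quat_gaussian_def)
  moreover have "distr M borel (qrot \<mu> \<nu> (\<alpha> i) (\<beta> i) \<circ> q) = distr M borel q" if "i \<in> {1..N}" for i
    using assms(6) that by (simp add: eq_distr_def qrot_def comp_def)
  ultimately have "distr M borel (qrot \<mu> \<nu> (\<Sum>i=1..N. \<alpha> i) (\<Sum>i=1..N. \<beta> i) \<circ> q) = distr M borel q"
    by (rule distr_qrot_sum_invariant[OF assms(2,3)])
  then show ?thesis
    by (simp add: eq_distr_def qrot_def comp_def)
qed

end
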